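(* Let $N\ge 2$, $n\ge 1$, and let $\mathbf{P}_1,\dots,\mathbf{P}_N\in\mathbb{R}^n$ satisfy $\sum_{i=1}^N\mathbf{P}_i=0$. Let $(Y_1,\dots,Y_N)\in[0,\infty)^N$ with not all $Y_i$ equal to zero. Consider the system for unknowns $\mathbf{V}_1,\dots,\mathbf{V}_N\in\mathbb{R}^n$: $$\sum_{i=1}^N Y_i\mathbf{V}_i=0,\qquad \sum_{j=1}^N B_{ij}(\mathbf{Y})\mathbf{V}_j=\mathbf{P}_i\quad(1\le i\le N),\tag{S1}$$ and the system for unknowns $\mathbf{F}_1,\dots,\mathbf{F}_N\in\mathbb{R}^n$: $$\sum_{i=1}^N\mathbf{F}_i=0,\qquad \Big(\sum_{k\ne i}d'_{ik}Y_k\Big)\mathbf{F}_i-Y_i\sum_{j\ne i}d'_{ij}\mathbf{F}_j=\mathbf{P}_i\quad(1\le i\le N).\tag{S2}$$ Then: (i) If $Y_i>0$ for all $i$, the system (S1) (which consists of $N+1$ vector equations) is consistent and determines $\mathbf{V}_1,\dots,\mathbf{V}_N$ uniquely, and (S2) determines $\mathbf{F}_i=Y_i\mathbf{V}_i$ uniquely. Moreover $\mathbf{V}=(\mathbf{V}_1,\dots,\mathbf{V}_N)$ is the unique solution of $\sum_{j}C_{ij}(\mathbf{Y})\mathbf{V}_j=\mathbf{P}_i$, $1\le i\le N$, where $C(\mathbf{Y})$ is symmetric positive definite. (ii) If, after relabeling, $Y_1,\dots,Y_k>0$ and $Y_{k+1}=\dots=Y_N=0$ for some $1\le k<N$, then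 in (S1) the vectors $\mathbf{V}_1,\dots,\mathbf{V}_k$ are uniquely determined while $\mathbf{V}_{k+1},\dots,\mathbf{V}_N$ are undetermined (when solutions exist); nevertheless all $\mathbf{F}_i$ are uniquely determined by (S2): for $i=k+1,\dots,N$, $\mathbf{F}_i=\mathbf{P}_i/S_i$ with $S_i=\sum_{j=1}^k d'_{ij}Y_j$, and $\mathbf{F}_1,\dots,\mathbf{F}_k$ are the unique solution of the $k\times k$ (vector) system $$\Big(\sum_{j\le k, j\ne i}d'_{ij}Y_j+\gamma Y_i\Big)\mathbf{F}_i-Y_i\sum_{j\le k,j\ne i}(d'_{ij}-\gamma)\mathbf{F}_j=\mathbf{P}_i+Y_i\sum_{j=k+1}^N(d'_{ij}-\gamma)\mathbf{F}_j,\quad 1\le i\le k.$$ In particular $\mathbf{F}_{k+1}=\dots=\mathbf{F}_N=0$ if $\mathbf{P}_{k+1}=\dots=\mathbf{P}_N=0$. (iii) In all cases, the linear system $$\Big(\sum_{j\ne i}d'_{ij}Y_j+\gamma Y_i\Big)\mathbf{F}_i-Y_i\sum_{j\ne i}(d'_{ij}-\gamma)\mathbf{F}_j=\mathbf{P}_i,\quad 1\le i\le N,\tag{S3}$$ has an invertible matrix (for every $\mathbf{P}\in\mathbb{R}^{Nn}$, whether or not $\sum_i\mathbf{P}_i=0$); its solution satisfies $\gamma(\sum_iY_i)(\sum_j\mathbf{F}_j)=\sum_j\mathbf{P}_j$, and when $\sum_i\mathbf{P}_i=0$ the system (S3) is equivalent to (S2), so the $\mathbf{F}_i$ are uniquely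 determined as the solution of (S3).
   Context: Fix molecular masses $M_1,\dots,M_N>0$ and symmetric constants $d_{ij}=d_{ji}>0$ for $i\ne j$ (inverse binary diffusion coefficients). Set $d'_{ij}=d_{ij}/(M_iM_j)$ for $i\neq j$ and $\gamma=\min_{i\ne j}d'_{ij}>0$. For $\mathbf{Y}=(Y_1,\dots,Y_N)$, the $N\times N$ matrix $B(\mathbf{Y})$ is defined by $B_{ij}(\mathbf{Y})=-d'_{ij}Y_iY_j$ for $j\ne i$ and $B_{ii}(\mathbf{Y})=\sum_{k\ne i}d'_{ik}Y_iY_k$, and $C(\mathbf{Y})$ is defined by $C_{ij}(\mathbf{Y})=B_{ij}(\mathbf{Y})+\gamma Y_iY_j$. Matrices act componentwise on $N$-tuples of vectors of $\mathbb{R}^n$. Sums $\sum_{j\ne i}$ range over $j\in\{1,\dots,N\}\setminus\{i\}$ unless otherwise indicated. *)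

theory Defs
  imports "HOL-Analysis.Analysis"
begin

text \<open>Species are indexed by 1..N (natural numbers); only values on this
range matter. M: molecular masses, d: inverse binary diffusion coefficients.\<close>

definition dp :: "(nat \<Rightarrow> real) \<Rightarrow> (nat \<Rightarrow> nat \<Rightarrow> real) \<Rightarrow> nat \<Rightarrow> nat \<Rightarrow> real" where
  "dp M d i j = d i j / (M i * M j)"

definition gam :: "nat \<Rightarrow> (nat \<Rightarrow> real) \<Rightarrow> (nat \<Rightarrow> nat \<Rightarrow> real) \<Rightarrow> real" where
  "gam N M d = Min {dp M d i j | i j. i \<in> {1..N} \<and> j \<in> {1..N} \<and> i \<noteq> j}"

definition Bm :: "nat \<Rightarrow> (nat \<Rightarrow> real) \<Rightarrow> (nat \<Rightarrow> nat \<Rightarrow> real) \<Rightarrow> (nat \<Rightarrow> real) \<Rightarrow> nat \<Rightarrow> nat \<Rightarrow> real" where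
  "Bm N M d Y i j = (if i = j then (\<Sum>k\<in>{1..N}-{i}. dp M d i k * Y i * Y k)
                     else - dp M d i j * Y i * Y j)"

definition Cm :: "nat \<Rightarrow> (nat \<Rightarrow> real) \<Rightarrow> (nat \<Rightarrow> nat \<Rightarrow> real) \<Rightarrow> (nat \<Rightarrow> real) \<Rightarrow> nat \<Rightarrow> nat \<Rightarrow> real" where
  "Cm N M d Y i j = Bm N M d Y i j + gam N M d * Y i * Y j"

definition S1 :: "nat \<Rightarrow> (nat \<Rightarrow> real) \<Rightarrow> (nat \<Rightarrow> nat \<Rightarrow> real) \<Rightarrow> (nat \<Rightarrow> real)
    \<Rightarrow> (nat \<Rightarrow> 'v::real_vector) \<Rightarrow> (nat \<Rightarrow> 'v) \<Rightarrow> bool" where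
  "S1 N M d Y P V \<longleftrightarrow> (\<Sum>i\<in>{1..N}. Y i *\<^sub>R V i) = 0 \<and>
      (\<forall>i\<in>{1..N}. (\<Sum>j\<in>{1..N}. Bm N M d Y i j *\<^sub>R V j) = P i)"

definition S2 :: "nat \<Rightarrow> (nat \<Rightarrow> real) \<Rightarrow> (nat \<Rightarrow> nat \<Rightarrow> real) \<Rightarrow> (nat \<Rightarrow> real)
    \<Rightarrow> (nat \<Rightarrow> 'v::real_vector) \<Rightarrow> (nat \<Rightarrow> 'v) \<Rightarrow> bool" where
  "S2 N M d Y P F \<longleftrightarrow> (\<Sum>i\<in>{1..N}. F i) = 0 \<and>
      (\<forall>i\<in>{1..N}. (\<Sum>k\<in>{1..N}-{i}. dp M d i k * Y k) *\<^sub>R F i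
                    - Y i *\<^sub>R (\<Sum>j\<in>{1..N}-{i}. dp M d i j *\<^sub>R F j) = P i)"

definition S3 :: "nat \<Rightarrow> (nat \<Rightarrow> real) \<Rightarrow> (nat \<Rightarrow> nat \<Rightarrow> real) \<Rightarrow> (nat \<Rightarrow> real)
    \<Rightarrow> (nat \<Rightarrow> 'v::real_vector) \<Rightarrow> (nat \<Rightarrow> 'v) \<Rightarrow> bool" where
  "S3 N M d Y P F \<longleftrightarrow>
      (\<forall>i\<in>{1..N}. ((\<Sum>j\<in>{1..N}-{i}. dp M d i j * Y j) + gam N M d * Y i) *\<^sub>R F i
                    - Y i *\<^sub>R (\<Sum>j\<in>{1..N}-{i}. (dp M d i j - gam N M d) *\<^sub>R F j) = P i)"

definition Csys :: "nat \<Rightarrow> (nat \<Rightarrow> real) \<Rightarrow> (nat \<Rightarrow> nat \<Rightarrow> real) \<Rightarrow> (nat \<Rightarrow> real)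
    \<Rightarrow> (nat \<Rightarrow> 'v::real_vector) \<Rightarrow> (nat \<Rightarrow> 'v) \<Rightarrow> bool" where
  "Csys N M d Y P V \<longleftrightarrow> (\<forall>i\<in>{1..N}. (\<Sum>j\<in>{1..N}. Cm N M d Y i j *\<^sub>R V j) = P i)"

text \<open>The reduced k x k system of part (ii); F supplies the values F_{k+1..N}
  on the right-hand side, G is the unknown (G_1..G_k).\<close>
definition Ksys :: "nat \<Rightarrow> nat \<Rightarrow> (nat \<Rightarrow> real) \<Rightarrow> (nat \<Rightarrow> nat \<Rightarrow> real) \<Rightarrow> (nat \<Rightarrow> real)
    \<Rightarrow> (nat \<Rightarrow> 'v::real_vector) \<Rightarrow> (nat \<Rightarrow> 'v) \<Rightarrow> (nat \<Rightarrow> 'v) \<Rightarrow> bool" where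
  "Ksys N k M d Y P F G \<longleftrightarrow>
      (\<forall>i\<in>{1..k}. ((\<Sum>j\<in>{1..k}-{i}. dp M d i j * Y j) + gam N M d * Y i) *\<^sub>R G i
                    - Y i *\<^sub>R (\<Sum>j\<in>{1..k}-{i}. (dp M d i j - gam N M d) *\<^sub>R G j)
                  = P i + Y i *\<^sub>R (\<Sum>j\<in>{k+1..N}. (dp M d i j - gam N M d) *\<^sub>R F j))"

definition uniq_sol :: "nat set \<Rightarrow> ((nat \<Rightarrow> 'v) \<Rightarrow> bool) \<Rightarrow> bool" where
  "uniq_sol I Q \<longleftrightarrow> (\<exists>x. Q x) \<and> (\<forall>x y. Q x \<longrightarrow> Q y \<longrightarrow> (\<forall>i\<in>I. x i = y i))"

definition sym_posdef :: "nat \<Rightarrow> (nat \<Rightarrow> nat \<Rightarrow> real) \<Rightarrow> bool" where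
  "sym_posdef N A \<longleftrightarrow> (\<forall>i\<in>{1..N}. \<forall>j\<in>{1..N}. A i j = A j i) \<and>
     (\<forall>x :: nat \<Rightarrow> real. (\<exists>i\<in>{1..N}. x i \<noteq> 0) \<longrightarrow>
        0 < (\<Sum>i\<in>{1..N}. \<Sum>j\<in>{1..N}. x i * A i j * x j))"

end

theory Submission
  imports Defs "Jordan_Normal_Form.Determinant"
begin

text \<open>(S3) is (S2) plus the rank-one term \<gamma> Y_i \<Sum>_j F_j, and the rows of (S2) sum to zero
  because d' is symmetric. Summing (S3) therefore gives \<gamma> (\<Sum> Y) (\<Sum> F) = \<Sum> P, and for
  \<Sum> P = 0 the two systems coincide. A solution of the homogeneous (S3) has \<Sum> F = 0 and so
  solves the homogeneous (S2), whose kernel is spanned by Y by a maximum principle for F_i / Y_i;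
  hence F = 0, and the square system (S3) is uniquely solvable. (S1) is (S2), and C(Y) V = P is
  (S3), both for F_i = Y_i V_i; this yields (i) and the determinacy claims of (ii). The row of a
  species with Y_i = 0 decouples to S_i F_i = P_i. Positive definiteness of C(Y) follows from
  V^T C V = 1/2 \<Sum>_{i \<noteq> j} d'_ij Y_i Y_j (V_i - V_j)^2 + \<gamma> (\<Sum>_i Y_i V_i)^2.\<close>

lemma injective_imp_solvable_lessThan:
  fixes a :: "nat \<Rightarrow> nat \<Rightarrow> real"
  assumes inj: "\<And>x. \<forall>i<n. (\<Sum>j<n. a i j * x j) = 0 \<Longrightarrow> \<forall>i<n. x i = 0"
  shows "\<exists>x. \<forall>i<n. (\<Sum>j<n. a i j * x j) = b i"
proof -
  define A where "A = mat n n (\<lambda>(i, j). a i j)"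
  have A: "A \<in> carrier_mat n n" by (simp add: A_def)
  have mult_A: "(A *\<^sub>v v) $ i = (\<Sum>j<n. a i j * v $ j)" if "v \<in> carrier_vec n" "i < n" for v i
    using that by (simp add: A_def scalar_prod_def atLeast0LessThan)
  have "det A \<noteq> 0"
  proof
    assume "det A = 0"
    then obtain v where v: "v \<in> carrier_vec n" "v \<noteq> 0\<^sub>v n" "A *\<^sub>v v = 0\<^sub>v n"
      using det_0_iff_vec_prod_zero[OF A] by auto
    have "\<forall>i<n. (\<Sum>j<n. a i j * v $ j) = 0"
      using v(3) mult_A[OF v(1)] by (metis index_zero_vec(1))
    then have "\<forall>i<n. v $ i = 0" by (rule inj)
    then have "v = 0\<^sub>v n" using v(1) by (intro eq_vecI) auto
    with v(2) show False ..
  qed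
  then obtain B where B: "B \<in> carrier_mat n n" "A * B = 1\<^sub>m n"
    using det_non_zero_imp_unit[OF A] by (auto simp: Units_def ring_mat_def)
  define w where "w = B *\<^sub>v vec n b"
  have w: "w \<in> carrier_vec n" using B by (simp add: w_def)
  have "A *\<^sub>v w = vec n b"
    using assoc_mult_mat_vec[OF A B(1), of "vec n b"] B(2) by (simp add: w_def)
  then show ?thesis using mult_A[OF w] by (intro exI[of _ "\<lambda>j. w $ j"]) auto
qed

lemma injective_imp_solvable:
  fixes a :: "nat \<Rightarrow> nat \<Rightarrow> real"
  assumes "finite I"
    and inj: "\<And>x. \<forall>i\<in>I. (\<Sum>j\<in>I. a i j * x j) = 0 \<Longrightarrow> \<forall>i\<in>I. x i = 0"
  shows "\<exists>x. \<forall>i\<in>I. (\<Sum>j\<in>I. a i j * x j) = b i"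
proof -
  let ?n = "card I"
  obtain h where h: "bij_betw h {..<?n} I"
    using ex_bij_betw_nat_finite[OF assms(1)] by (auto simp: atLeast0LessThan)
  define h' where "h' = inv_into {..<?n} h"
  have hI: "h j \<in> I" and h'h: "h' (h j) = j" if "j < ?n" for j
    using that h by (auto simp: h'_def bij_betw_def)
  have h'I: "h' i < ?n" and hh': "h (h' i) = i" if "i \<in> I" for i
    using that h inv_into_into[of i h "{..<?n}"] by (auto simp: h'_def bij_betw_def f_inv_into_f)
  have reindex: "(\<Sum>j\<in>I. f j) = (\<Sum>j<?n. f (h j))" for f :: "nat \<Rightarrow> real"
    using sum.reindex_bij_betw[OF h] by metis
  have pull_back: "(\<Sum>j\<in>I. a i j * x (h' j)) = (\<Sum>j<?n. a (h (h' i)) (h j) * x j)"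
    if "i \<in> I" for i x
    using that by (simp add: reindex hh' h'h)
  have "\<exists>x. \<forall>i<?n. (\<Sum>j<?n. a (h i) (h j) * x j) = b (h i)"
  proof (rule injective_imp_solvable_lessThan)
    fix x assume "\<forall>i<?n. (\<Sum>j<?n. a (h i) (h j) * x j) = 0"
    then have "\<forall>i\<in>I. (\<Sum>j\<in>I. a i j * x (h' j)) = 0"
      by (simp add: pull_back h'I)
    then show "\<forall>i<?n. x i = 0" using inj hI h'h by metis
  qed
  then obtain x where x: "\<forall>i<?n. (\<Sum>j<?n. a (h i) (h j) * x j) = b (h i)" ..
  have "\<forall>i\<in>I. (\<Sum>j\<in>I. a i j * x (h' j)) = b i"
  proof
    fix i assume i: "i \<in> I"
    have "(\<Sum>j\<in>I. a i j * x (h' j)) = b (h (h' i))"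
      unfolding pull_back[OF i] using x h'I[OF i] by blast
    then show "(\<Sum>j\<in>I. a i j * x (h' j)) = b i" by (simp only: hh'[OF i])
  qed
  then show ?thesis by (intro exI[of _ "\<lambda>j. x (h' j)"]) simp
qed

text \<open>Left-hand sides of (S2) and (S3) over an arbitrary species set I, with D standing for d'
  and g for \<gamma>; the reduced system of part (ii) is (S3) over I = {1..k}.\<close>

definition s2_lhs :: "nat set \<Rightarrow> (nat \<Rightarrow> nat \<Rightarrow> real) \<Rightarrow> (nat \<Rightarrow> real)
    \<Rightarrow> (nat \<Rightarrow> 'v::real_vector) \<Rightarrow> nat \<Rightarrow> 'v" where
  "s2_lhs I D Y F i = (\<Sum>j\<in>I-{i}. D i j * Y j) *\<^sub>R F i - Y i *\<^sub>R (\<Sum>j\<in>I-{i}. D i j *\<^sub>R F j)"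

definition s3_lhs :: "nat set \<Rightarrow> (nat \<Rightarrow> nat \<Rightarrow> real) \<Rightarrow> real \<Rightarrow> (nat \<Rightarrow> real)
    \<Rightarrow> (nat \<Rightarrow> 'v::real_vector) \<Rightarrow> nat \<Rightarrow> 'v" where
  "s3_lhs I D g Y F i = ((\<Sum>j\<in>I-{i}. D i j * Y j) + g * Y i) *\<^sub>R F i
                        - Y i *\<^sub>R (\<Sum>j\<in>I-{i}. (D i j - g) *\<^sub>R F j)"

definition s3_coeff :: "nat set \<Rightarrow> (nat \<Rightarrow> nat \<Rightarrow> real) \<Rightarrow> real \<Rightarrow> (nat \<Rightarrow> real) \<Rightarrow> nat \<Rightarrow> nat \<Rightarrow> real" where
  "s3_coeff I D g Y i j =
     (if i = j then (\<Sum>k\<in>I-{i}. D i k * Y k) + g * Y i else - Y i * (D i j - g))"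

lemma sum_off_diagonal_swap:
  fixes f :: "nat \<Rightarrow> nat \<Rightarrow> 'a::comm_monoid_add"
  assumes "finite I"
  shows "(\<Sum>i\<in>I. \<Sum>j\<in>I-{i}. f i j) = (\<Sum>i\<in>I. \<Sum>j\<in>I-{i}. f j i)"
proof -
  have off_diag: "(\<Sum>j\<in>I-{i}. h j) = (\<Sum>j\<in>I. if j = i then 0 else h j)" for i and h :: "nat \<Rightarrow> 'a"
    using assms by (simp add: sum.If_cases Diff_eq Compl_eq)
  have "(\<Sum>i\<in>I. \<Sum>j\<in>I-{i}. f i j) = (\<Sum>i\<in>I. \<Sum>j\<in>I. if j = i then 0 else f i j)"
    by (simp add: off_diag)
  also have "\<dots> = (\<Sum>j\<in>I. \<Sum>i\<in>I. if j = i then 0 else f i j)"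
    by (rule sum.swap)
  also have "\<dots> = (\<Sum>j\<in>I. \<Sum>i\<in>I-{j}. f i j)"
    by (simp add: off_diag eq_commute)
  finally show ?thesis .
qed

lemma sum_off_diagonal_quadratic:
  fixes x :: "nat \<Rightarrow> real"
  assumes "finite I" and "\<And>i j. i \<in> I \<Longrightarrow> j \<in> I \<Longrightarrow> T i j = T j i"
  shows "2 * (\<Sum>i\<in>I. x i * (\<Sum>j\<in>I-{i}. T i j * (x i - x j)))
       = (\<Sum>i\<in>I. \<Sum>j\<in>I-{i}. T i j * (x i - x j)\<^sup>2)"
proof -
  have "(\<Sum>i\<in>I. x i * (\<Sum>j\<in>I-{i}. T i j * (x i - x j)))
      = (\<Sum>i\<in>I. \<Sum>j\<in>I-{i}. T j i * (x j * (x j - x i)))"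
    using sum_off_diagonal_swap[OF assms(1), of "\<lambda>i j. T i j * (x i * (x i - x j))"]
    by (simp add: sum_distrib_left mult_ac)
  also have "\<dots> = (\<Sum>i\<in>I. \<Sum>j\<in>I-{i}. T i j * (x j * (x j - x i)))"
    using assms(2) by (intro sum.cong refl) auto
  finally have "2 * (\<Sum>i\<in>I. x i * (\<Sum>j\<in>I-{i}. T i j * (x i - x j)))
      = (\<Sum>i\<in>I. \<Sum>j\<in>I-{i}. T i j * (x i * (x i - x j)) + T i j * (x j * (x j - x i)))"
    by (simp add: sum.distrib sum_distrib_left mult_ac)
  also have "\<dots> = (\<Sum>i\<in>I. \<Sum>j\<in>I-{i}. T i j * (x i - x j)\<^sup>2)"
    by (intro sum.cong refl) (simp add: power2_eq_square algebra_simps)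
  finally show ?thesis .
qed

lemma sum_off_diagonal_squares_eq_0:
  fixes x :: "nat \<Rightarrow> real"
  assumes "finite I" and T_pos: "\<And>i j. i \<in> I \<Longrightarrow> j \<in> I \<Longrightarrow> i \<noteq> j \<Longrightarrow> 0 < T i j"
    and zero: "(\<Sum>i\<in>I. \<Sum>j\<in>I-{i}. T i j * (x i - x j)\<^sup>2) = 0"
    and "i \<in> I" "j \<in> I"
  shows "x i = x j"
proof (cases "i = j")
  case False
  have terms_nonneg: "0 \<le> T k l * (x k - x l)\<^sup>2" if "k \<in> I" "l \<in> I - {k}" for k l
    using T_pos that by (simp add: less_imp_le)
  have "(\<Sum>k\<in>I. \<Sum>l\<in>I-{k}. T k l * (x k - x l)\<^sup>2) = 0
      \<longleftrightarrow> (\<forall>k\<in>I. (\<Sum>l\<in>I-{k}. T k l * (x k - x l)\<^sup>2) = 0)"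
    by (rule sum_nonneg_eq_0_iff[OF assms(1)]) (use terms_nonneg in \<open>auto intro: sum_nonneg\<close>)
  then have "(\<Sum>l\<in>I-{i}. T i l * (x i - x l)\<^sup>2) = 0"
    using zero \<open>i \<in> I\<close> by blast
  moreover have "finite (I - {i})" using assms(1) by simp
  ultimately have "T i j * (x i - x j)\<^sup>2 = 0"
    using sum_nonneg_eq_0_iff[of "I - {i}" "\<lambda>l. T i l * (x i - x l)\<^sup>2"]
      terms_nonneg \<open>i \<in> I\<close> \<open>j \<in> I\<close> False
    by blast
  then show ?thesis using T_pos[OF \<open>i \<in> I\<close> \<open>j \<in> I\<close> False] by simp
qed simp

lemma s3_lhs_eq_s2_lhs:
  assumes "finite I" "i \<in> I"
  shows "s3_lhs I D g Y F i = s2_lhs I D Y F i + (g * Y i) *\<^sub>R (\<Sum>j\<in>I. F j)"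
proof -
  have split: "(\<Sum>j\<in>I. F j) = F i + (\<Sum>j\<in>I-{i}. F j)"
    using assms by (simp add: sum.remove)
  have distrib: "(\<Sum>j\<in>I-{i}. (D i j - g) *\<^sub>R F j)
      = (\<Sum>j\<in>I-{i}. D i j *\<^sub>R F j) - g *\<^sub>R (\<Sum>j\<in>I-{i}. F j)"
    by (simp add: scaleR_left_diff_distrib sum_subtractf scaleR_sum_right)
  show ?thesis unfolding s3_lhs_def s2_lhs_def split distrib
    by (simp add: algebra_simps)
qed

lemma sum_s2_lhs_eq_0:
  assumes "finite I" and D_sym: "\<And>i j. i \<in> I \<Longrightarrow> j \<in> I \<Longrightarrow> D i j = D j i"
  shows "(\<Sum>i\<in>I. s2_lhs I D Y F i) = 0"
proof -
  have "(\<Sum>i\<in>I. Y i *\<^sub>R (\<Sum>j\<in>I-{i}. D i j *\<^sub>R F j)) = (\<Sum>i\<in>I. \<Sum>j\<in>I-{i}. (Y j * D j i) *\<^sub>R F i)"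
    using sum_off_diagonal_swap[OF assms(1), of "\<lambda>i j. (Y i * D i j) *\<^sub>R F j"]
    by (simp add: scaleR_sum_right)
  also have "\<dots> = (\<Sum>i\<in>I. (\<Sum>j\<in>I-{i}. D i j * Y j) *\<^sub>R F i)"
    using D_sym by (auto intro!: sum.cong simp: scaleR_sum_left mult.commute)
  finally show ?thesis by (simp add: s2_lhs_def sum_subtractf)
qed

lemma sum_s3_lhs:
  assumes "finite I" and "\<And>i j. i \<in> I \<Longrightarrow> j \<in> I \<Longrightarrow> D i j = D j i"
  shows "(\<Sum>i\<in>I. s3_lhs I D g Y F i) = (g * (\<Sum>i\<in>I. Y i)) *\<^sub>R (\<Sum>j\<in>I. F j)"
  using assms
  by (simp add: s3_lhs_eq_s2_lhs sum.distrib sum_s2_lhs_eq_0 scaleR_sum_left sum_distrib_left)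

lemma s2_lhs_cong:
  assumes "\<And>j. j \<in> I \<Longrightarrow> F j = G j" "i \<in> I"
  shows "s2_lhs I D Y F i = s2_lhs I D Y G i"
  using assms by (simp add: s2_lhs_def)

lemma s3_lhs_diff: "s3_lhs I D g Y (\<lambda>j. F j - G j) i = s3_lhs I D g Y F i - s3_lhs I D g Y G i"
proof -
  have distrib: "(\<Sum>j\<in>I-{i}. (D i j - g) *\<^sub>R (F j - G j))
      = (\<Sum>j\<in>I-{i}. (D i j - g) *\<^sub>R F j) - (\<Sum>j\<in>I-{i}. (D i j - g) *\<^sub>R G j)"
    by (simp only: scaleR_diff_right sum_subtractf)
  show ?thesis unfolding s3_lhs_def distrib by (simp add: algebra_simps)
qed

lemma s3_lhs_component:
  fixes F :: "nat \<Rightarrow> real ^ 'n"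
  shows "s3_lhs I D g Y F i $ c = s3_lhs I D g Y (\<lambda>j. F j $ c) i"
  by (simp add: s3_lhs_def sum_component)

lemma s3_lhs_eq_s3_coeff:
  assumes "finite I" "i \<in> I"
  shows "s3_lhs I D g Y F i = (\<Sum>j\<in>I. s3_coeff I D g Y i j *\<^sub>R F j)"
proof -
  have "(\<Sum>j\<in>I. s3_coeff I D g Y i j *\<^sub>R F j)
      = s3_coeff I D g Y i i *\<^sub>R F i + (\<Sum>j\<in>I-{i}. s3_coeff I D g Y i j *\<^sub>R F j)"
    using assms by (simp add: sum.remove)
  also have "(\<Sum>j\<in>I-{i}. s3_coeff I D g Y i j *\<^sub>R F j) = - (Y i *\<^sub>R (\<Sum>j\<in>I-{i}. (D i j - g) *\<^sub>R F j))"
    by (simp add: s3_coeff_def scaleR_sum_right sum_negf[symmetric])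
  finally show ?thesis by (simp add: s3_lhs_def s3_coeff_def)
qed

lemma s2_lhs_real:
  fixes x :: "nat \<Rightarrow> real"
  shows "s2_lhs I D Y x i = (\<Sum>j\<in>I-{i}. D i j * (Y j * x i - Y i * x j))"
  unfolding s2_lhs_def
  by (simp add: sum_distrib_left sum_distrib_right sum_subtractf algebra_simps)

lemma s3_lhs_restrict:
  fixes F :: "nat \<Rightarrow> 'v::real_vector"
  assumes "finite I" "K \<subseteq> I" "i \<in> K" and Y_out: "\<And>j. j \<in> I - K \<Longrightarrow> Y j = 0"
  shows "s3_lhs I D g Y F i = s3_lhs K D g Y F i - Y i *\<^sub>R (\<Sum>j\<in>I-K. (D i j - g) *\<^sub>R F j)"
proof -
  have "I - {i} = (K - {i}) \<union> (I - K)" and "(K - {i}) \<inter> (I - K) = {}"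
    using assms(2,3) by auto
  moreover have "finite (K - {i})" "finite (I - K)" using assms(1,2) finite_subset by auto
  ultimately have sum_split: "(\<Sum>j\<in>I-{i}. f j) = (\<Sum>j\<in>K-{i}. f j) + (\<Sum>j\<in>I-K. f j)"
    for f :: "nat \<Rightarrow> 'a::comm_monoid_add"
    by (simp add: sum.union_disjoint)
  have "(\<Sum>j\<in>I-K. D i j * Y j) = 0" using Y_out by simp
  then show ?thesis unfolding s3_lhs_def sum_split by (simp add: algebra_simps)
qed

locale diffusion_coeffs =
  fixes I :: "nat set" and D :: "nat \<Rightarrow> nat \<Rightarrow> real" and Y :: "nat \<Rightarrow> real"
  assumes finite_I: "finite I"
    and D_sym: "\<And>i j. i \<in> I \<Longrightarrow> j \<in> I \<Longrightarrow> D i j = D j i"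
    and D_pos: "\<And>i j. i \<in> I \<Longrightarrow> j \<in> I \<Longrightarrow> i \<noteq> j \<Longrightarrow> 0 < D i j"
    and Y_nonneg: "\<And>i. i \<in> I \<Longrightarrow> 0 \<le> Y i"
    and ex_Y_pos: "\<exists>i\<in>I. 0 < Y i"
begin

lemma sum_Y_pos: "0 < sum Y I"
  using ex_Y_pos finite_I Y_nonneg by (metis sum_pos2)

lemma s2_lhs_real_eq_0_imp_zero_weight:
  fixes x :: "nat \<Rightarrow> real"
  assumes hom: "s2_lhs I D Y x i = 0" and "i \<in> I" "Y i = 0"
  shows "x i = 0"
proof -
  obtain m where m: "m \<in> I" "0 < Y m" using ex_Y_pos by blast
  have "0 < (\<Sum>j\<in>I-{i}. D i j * Y j)"
  proof (rule sum_pos2)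
    show "finite (I - {i})" using finite_I by simp
    have "i \<noteq> m" using m assms(3) by auto
    then show "m \<in> I - {i}" and "0 < D i m * Y m"
      using m assms(2) D_pos[of i m] by auto
    show "0 \<le> D i j * Y j" if "j \<in> I - {i}" for j
      using that assms(2) D_pos[of i j] Y_nonneg[of j] by simp
  qed
  moreover have "(\<Sum>j\<in>I-{i}. D i j * Y j) * x i = 0"
    using hom assms(3) by (simp add: s2_lhs_real sum_distrib_right mult.assoc)
  ultimately show ?thesis by simp
qed

lemma s2_lhs_real_kernel:
  fixes x :: "nat \<Rightarrow> real"
  assumes hom: "\<And>i. i \<in> I \<Longrightarrow> s2_lhs I D Y x i = 0"
  shows "\<exists>c. \<forall>i\<in>I. x i = c * Y i"
proof -
  define J where "J = {i\<in>I. 0 < Y i}"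
  have "finite J" "J \<noteq> {}" using finite_I ex_Y_pos by (auto simp: J_def)
  then have "Max ((\<lambda>j. x j / Y j) ` J) \<in> (\<lambda>j. x j / Y j) ` J" by simp
  then obtain m where "m \<in> J" and m_Max: "x m / Y m = Max ((\<lambda>j. x j / Y j) ` J)" by auto
  have m_max: "x j / Y j \<le> x m / Y m" if "j \<in> J" for j
    using that \<open>finite J\<close> by (simp add: m_Max)
  have m: "m \<in> I" "0 < Y m" using \<open>m \<in> J\<close> by (auto simp: J_def)
  have zero_weight: "x j = 0" if "j \<in> I" "Y j = 0" for j
    using s2_lhs_real_eq_0_imp_zero_weight hom that by blast
  \<comment> \<open>Maximum principle: every term of row m is nonnegative, and they sum to zero.\<close>
  have term_nonneg: "0 \<le> D m j * (Y j * x m - Y m * x j)" if "j \<in> I - {m}" for j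
  proof (cases "Y j = 0")
    case False
    then have "j \<in> J" "0 < Y j" using that Y_nonneg[of j] by (auto simp: J_def)
    then have "0 \<le> Y j * Y m * (x m / Y m - x j / Y j)" using m_max m by simp
    also have "\<dots> = Y j * x m - Y m * x j" using \<open>0 < Y j\<close> m by (simp add: field_simps)
    finally show ?thesis using D_pos[of m j] m that by simp
  qed (use that zero_weight D_pos[of m j] m in simp)
  have "(\<Sum>j\<in>I-{m}. D m j * (Y j * x m - Y m * x j)) = 0"
    using hom[OF m(1)] by (simp add: s2_lhs_real)
  moreover have "finite (I - {m})" using finite_I by simp
  ultimately have "\<forall>j\<in>I-{m}. D m j * (Y j * x m - Y m * x j) = 0"
    using sum_nonneg_eq_0_iff[of "I - {m}" "\<lambda>j. D m j * (Y j * x m - Y m * x j)"] term_nonneg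
    by blast
  then have "x j = x m / Y m * Y j" if "j \<in> I" for j
    using that m D_pos[of m j] by (cases "j = m") (force simp: field_simps)+
  then show ?thesis by blast
qed

lemma s3_lhs_real_kernel:
  fixes x :: "nat \<Rightarrow> real"
  assumes "g \<noteq> 0" and hom: "\<And>i. i \<in> I \<Longrightarrow> s3_lhs I D g Y x i = 0"
  shows "\<forall>i\<in>I. x i = 0"
proof -
  have "(g * sum Y I) * sum x I = 0"
    using sum_s3_lhs[where D = D and g = g and Y = Y and F = x, OF finite_I D_sym] hom by simp
  then have sum_x: "sum x I = 0" using assms(1) sum_Y_pos by simp
  then have "s2_lhs I D Y x i = 0" if "i \<in> I" for i
    using hom[OF that] s3_lhs_eq_s2_lhs[OF finite_I that, where D = D and g = g and Y = Y and F = x] by simp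
  then obtain c where c: "\<forall>i\<in>I. x i = c * Y i" using s2_lhs_real_kernel by blast
  then have "c * sum Y I = 0" using sum_x by (simp add: sum_distrib_left)
  then show ?thesis using c sum_Y_pos by simp
qed

lemma s3_lhs_injective:
  fixes F G :: "nat \<Rightarrow> real ^ 'n"
  assumes "g \<noteq> 0" and eq: "\<And>i. i \<in> I \<Longrightarrow> s3_lhs I D g Y F i = s3_lhs I D g Y G i"
    and "i \<in> I"
  shows "F i = G i"
proof -
  have "(F i - G i) $ c = 0" for c
  proof -
    have "s3_lhs I D g Y (\<lambda>j. (F j - G j) $ c) k = 0" if "k \<in> I" for k
      using eq[OF that] by (simp flip: s3_lhs_component add: s3_lhs_diff)
    then show ?thesis using s3_lhs_real_kernel[OF assms(1)] \<open>i \<in> I\<close> by blast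
  qed
  then show ?thesis by (simp add: Finite_Cartesian_Product.vec_eq_iff)
qed

lemma s3_lhs_solvable:
  fixes Q :: "nat \<Rightarrow> real ^ 'n"
  assumes "g \<noteq> 0"
  shows "\<exists>F. \<forall>i\<in>I. s3_lhs I D g Y F i = Q i"
proof -
  have "\<exists>x. \<forall>i\<in>I. (\<Sum>j\<in>I. s3_coeff I D g Y i j * x j) = Q i $ c" for c
  proof (rule injective_imp_solvable[OF finite_I])
    fix x :: "nat \<Rightarrow> real"
    assume "\<forall>i\<in>I. (\<Sum>j\<in>I. s3_coeff I D g Y i j * x j) = 0"
    then have "s3_lhs I D g Y x i = 0" if "i \<in> I" for i
      using that s3_lhs_eq_s3_coeff[OF finite_I that, where D = D and g = g and Y = Y and F = x]
      by (simp add: real_scaleR_def)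
    then show "\<forall>i\<in>I. x i = 0" using s3_lhs_real_kernel[OF assms] by blast
  qed
  then obtain X where X: "\<And>c. \<forall>i\<in>I. (\<Sum>j\<in>I. s3_coeff I D g Y i j * X c j) = Q i $ c"
    by metis
  have "s3_lhs I D g Y (\<lambda>j. \<chi> c. X c j) i = Q i" if "i \<in> I" for i
    using X that
    by (simp add: Finite_Cartesian_Product.vec_eq_iff s3_lhs_component s3_lhs_eq_s3_coeff[OF finite_I] real_scaleR_def)
  then show ?thesis by blast
qed

end

lemma S2_iff:
  "S2 N M d Y P F \<longleftrightarrow> sum F {1..N} = 0 \<and> (\<forall>i\<in>{1..N}. s2_lhs {1..N} (dp M d) Y F i = P i)"
  by (simp add: S2_def s2_lhs_def)

lemma S3_iff:
  "S3 N M d Y P F \<longleftrightarrow> (\<forall>i\<in>{1..N}. s3_lhs {1..N} (dp M d) (gam N M d) Y F i = P i)"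
  by (simp add: S3_def s3_lhs_def)

lemma Ksys_iff:
  "Ksys N k M d Y P F G \<longleftrightarrow> (\<forall>i\<in>{1..k}. s3_lhs {1..k} (dp M d) (gam N M d) Y G i
      = P i + Y i *\<^sub>R (\<Sum>j\<in>{k+1..N}. (dp M d i j - gam N M d) *\<^sub>R F j))"
  by (simp add: Ksys_def s3_lhs_def)

lemma Bm_sum_eq_s2_lhs:
  assumes "i \<in> {1..N}"
  shows "(\<Sum>j\<in>{1..N}. Bm N M d Y i j *\<^sub>R V j) = s2_lhs {1..N} (dp M d) Y (\<lambda>j. Y j *\<^sub>R V j) i"
proof -
  have diag: "(\<Sum>j\<in>{1..N}. Bm N M d Y i j *\<^sub>R V j)
      = Bm N M d Y i i *\<^sub>R V i + (\<Sum>j\<in>{1..N}-{i}. Bm N M d Y i j *\<^sub>R V j)"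
    using assms by (simp add: sum.remove)
  have "(\<Sum>j\<in>{1..N}-{i}. Bm N M d Y i j *\<^sub>R V j)
      = (\<Sum>j\<in>{1..N}-{i}. - (Y i *\<^sub>R (dp M d i j *\<^sub>R (Y j *\<^sub>R V j))))"
    by (intro sum.cong refl) (auto simp: Bm_def mult_ac)
  also have "\<dots> = - (Y i *\<^sub>R (\<Sum>j\<in>{1..N}-{i}. dp M d i j *\<^sub>R (Y j *\<^sub>R V j)))"
    by (simp add: scaleR_sum_right sum_negf)
  finally have off_diag: "(\<Sum>j\<in>{1..N}-{i}. Bm N M d Y i j *\<^sub>R V j) = \<dots>" .
  have "Bm N M d Y i i = (\<Sum>k\<in>{1..N}-{i}. dp M d i k * Y k) * Y i"
    by (simp add: Bm_def sum_distrib_right sum_distrib_left mult_ac)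
  then show ?thesis unfolding diag off_diag s2_lhs_def by simp
qed

lemma Cm_sum_eq_s3_lhs:
  assumes "i \<in> {1..N}"
  shows "(\<Sum>j\<in>{1..N}. Cm N M d Y i j *\<^sub>R V j)
       = s3_lhs {1..N} (dp M d) (gam N M d) Y (\<lambda>j. Y j *\<^sub>R V j) i"
proof -
  have "(\<Sum>j\<in>{1..N}. Cm N M d Y i j *\<^sub>R V j)
      = (\<Sum>j\<in>{1..N}. Bm N M d Y i j *\<^sub>R V j) + (gam N M d * Y i) *\<^sub>R (\<Sum>j\<in>{1..N}. Y j *\<^sub>R V j)"
    by (simp add: Cm_def scaleR_add_left sum.distrib scaleR_sum_right mult_ac)
  then show ?thesis
    unfolding Bm_sum_eq_s2_lhs[OF assms] s3_lhs_eq_s2_lhs[OF finite_atLeastAtMost assms] .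
qed

lemma S1_iff_S2: "S1 N M d Y P V \<longleftrightarrow> S2 N M d Y P (\<lambda>i. Y i *\<^sub>R V i)"
  unfolding S1_def S2_iff using Bm_sum_eq_s2_lhs[of _ N M d Y V] by auto

lemma Csys_iff_S3: "Csys N M d Y P V \<longleftrightarrow> S3 N M d Y P (\<lambda>i. Y i *\<^sub>R V i)"
  unfolding Csys_def S3_iff using Cm_sum_eq_s3_lhs[of _ N M d Y V] by auto

lemma S1_update_zero_weight:
  assumes "S1 N M d Y P V" "Y i = 0"
  shows "S1 N M d Y P (V(i := w))"
proof -
  have "(\<lambda>j. Y j *\<^sub>R (V(i := w)) j) = (\<lambda>j. Y j *\<^sub>R V j)" using assms(2) by auto
  then show ?thesis using assms(1) by (simp add: S1_iff_S2)
qed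

lemma S2_cong:
  assumes "\<And>i. i \<in> {1..N} \<Longrightarrow> F i = G i"
  shows "S2 N M d Y P F \<longleftrightarrow> S2 N M d Y P G"
proof -
  have "sum F {1..N} = sum G {1..N}" using assms by simp
  moreover have "s2_lhs {1..N} (dp M d) Y F i = s2_lhs {1..N} (dp M d) Y G i" if "i \<in> {1..N}" for i
    using s2_lhs_cong[of "{1..N}" F G, OF assms that] .
  ultimately show ?thesis by (simp add: S2_iff)
qed


locale mixture =
  fixes N :: nat and M :: "nat \<Rightarrow> real" and d :: "nat \<Rightarrow> nat \<Rightarrow> real" and Y :: "nat \<Rightarrow> real"
  assumes two_le_N: "2 \<le> N"
    and M_pos: "\<And>i. i \<in> {1..N} \<Longrightarrow> 0 < M i"
    and d_sym: "\<And>i j. i \<in> {1..N} \<Longrightarrow> j \<in> {1..N} \<Longrightarrow> i \<noteq> j \<Longrightarrow> d i j = d j i"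
    and d_pos: "\<And>i j. i \<in> {1..N} \<Longrightarrow> j \<in> {1..N} \<Longrightarrow> i \<noteq> j \<Longrightarrow> 0 < d i j"
    and weights_nonneg: "\<And>i. i \<in> {1..N} \<Longrightarrow> 0 \<le> Y i"
    and ex_weight_nonzero: "\<exists>i\<in>{1..N}. Y i \<noteq> 0"
begin

sublocale diffusion_coeffs "{1..N}" "dp M d" Y
proof
  show "dp M d i j = dp M d j i" if "i \<in> {1..N}" "j \<in> {1..N}" for i j
    using that d_sym[of i j] by (cases "i = j") (auto simp: dp_def mult.commute)
  show "0 < dp M d i j" if "i \<in> {1..N}" "j \<in> {1..N}" "i \<noteq> j" for i j
    using that d_pos M_pos by (simp add: dp_def)
  show "\<exists>i\<in>{1..N}. 0 < Y i" using ex_weight_nonzero weights_nonneg by (force simp: less_le)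
qed (use weights_nonneg in auto)

lemma gam_pos: "0 < gam N M d"
proof -
  let ?A = "{dp M d i j | i j. i \<in> {1..N} \<and> j \<in> {1..N} \<and> i \<noteq> j}"
  have "?A \<subseteq> (\<lambda>(i, j). dp M d i j) ` ({1..N} \<times> {1..N})" by auto
  then have "finite ?A" by (rule finite_subset) simp
  moreover have "dp M d 1 2 \<in> ?A" using two_le_N by force
  then have "?A \<noteq> {}" by blast
  ultimately have "gam N M d \<in> ?A" unfolding gam_def by (rule Min_in)
  then show ?thesis using D_pos by auto
qed

lemma uniq_sol_S3: "uniq_sol {1..N} (S3 N M d Y (Q :: nat \<Rightarrow> real ^ 'n))"
  unfolding uniq_sol_def S3_iff
proof (intro conjI allI impI ballI)
  have "gam N M d \<noteq> 0" using gam_pos by simp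
  then show "\<exists>F. \<forall>i\<in>{1..N}. s3_lhs {1..N} (dp M d) (gam N M d) Y F i = Q i"
    by (rule s3_lhs_solvable)
  fix F G i
  assume "\<forall>i\<in>{1..N}. s3_lhs {1..N} (dp M d) (gam N M d) Y F i = Q i"
    and "\<forall>i\<in>{1..N}. s3_lhs {1..N} (dp M d) (gam N M d) Y G i = Q i" and "i \<in> {1..N}"
  with \<open>gam N M d \<noteq> 0\<close> show "F i = G i" by (rule_tac s3_lhs_injective) auto
qed

lemma S3_sum:
  assumes "S3 N M d Y Q F"
  shows "(gam N M d * sum Y {1..N}) *\<^sub>R sum F {1..N} = sum Q {1..N}"
  using assms sum_s3_lhs[where D = "dp M d" and g = "gam N M d" and Y = Y and F = F,
      OF finite_I D_sym]
  by (simp add: S3_iff)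

lemma S3_iff_S2:
  assumes "sum P {1..N} = 0"
  shows "S3 N M d Y P F \<longleftrightarrow> S2 N M d Y P F"
proof -
  have "sum F {1..N} = 0" if "S3 N M d Y P F"
    using S3_sum[OF that] assms gam_pos sum_Y_pos by simp
  then show ?thesis
    using s3_lhs_eq_s2_lhs[OF finite_I, where D = "dp M d" and g = "gam N M d" and Y = Y and F = F]
    by (auto simp: S3_iff S2_iff)
qed

lemma uniq_sol_S2:
  assumes "sum P {1..N} = 0"
  shows "uniq_sol {1..N} (S2 N M d Y (P :: nat \<Rightarrow> real ^ 'n))"
proof -
  have "S3 N M d Y P = S2 N M d Y P" using S3_iff_S2[OF assms] by blast
  then show ?thesis using uniq_sol_S3[of P] by simp
qed

lemma S1_eq_at_nonzero_weight:
  fixes P :: "nat \<Rightarrow> real ^ 'n"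
  assumes "sum P {1..N} = 0" "S1 N M d Y P V" "S1 N M d Y P V'" "i \<in> {1..N}" "Y i \<noteq> 0"
  shows "V i = V' i"
proof -
  have "S2 N M d Y P (\<lambda>i. Y i *\<^sub>R V i)" "S2 N M d Y P (\<lambda>i. Y i *\<^sub>R V' i)"
    using assms(2,3) by (simp_all add: S1_iff_S2)
  then have "Y i *\<^sub>R V i = Y i *\<^sub>R V' i"
    using uniq_sol_S2[OF assms(1)] assms(4) unfolding uniq_sol_def by blast
  then show ?thesis using assms(5) by simp
qed

lemma S1_solvable:
  fixes P :: "nat \<Rightarrow> real ^ 'n"
  assumes "sum P {1..N} = 0" and Y_pos: "\<forall>i\<in>{1..N}. 0 < Y i"
  shows "\<exists>V. S1 N M d Y P V"
proof -
  obtain F where F: "S2 N M d Y P F" using uniq_sol_S2[OF assms(1)] by (auto simp: uniq_sol_def)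
  have "Y i *\<^sub>R (inverse (Y i) *\<^sub>R F i) = F i" if "i \<in> {1..N}" for i
  proof -
    have "Y i \<noteq> 0" using Y_pos[rule_format, OF that] by simp
    then show ?thesis by simp
  qed
  then have "S2 N M d Y P (\<lambda>i. Y i *\<^sub>R (inverse (Y i) *\<^sub>R F i)) \<longleftrightarrow> S2 N M d Y P F"
    by (rule S2_cong)
  then have "S1 N M d Y P (\<lambda>i. inverse (Y i) *\<^sub>R F i)" using F by (simp add: S1_iff_S2)
  then show ?thesis by blast
qed

lemma uniq_sol_S1:
  fixes P :: "nat \<Rightarrow> real ^ 'n"
  assumes "sum P {1..N} = 0" and "\<forall>i\<in>{1..N}. 0 < Y i"
  shows "uniq_sol {1..N} (S1 N M d Y P)"
  unfolding uniq_sol_def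
  using S1_solvable[OF assms] S1_eq_at_nonzero_weight[OF assms(1)] assms(2) by force

lemma Csys_eq_S1:
  assumes "sum P {1..N} = 0"
  shows "Csys N M d Y P = S1 N M d Y P"
  using S3_iff_S2[OF assms] by (simp add: fun_eq_iff Csys_iff_S3 S1_iff_S2)

lemma sym_posdef_Cm:
  assumes Y_pos: "\<forall>i\<in>{1..N}. 0 < Y i"
  shows "sym_posdef N (Cm N M d Y)"
  unfolding sym_posdef_def
proof (intro conjI allI impI ballI)
  fix i j assume "i \<in> {1..N}" "j \<in> {1..N}"
  then show "Cm N M d Y i j = Cm N M d Y j i" using D_sym[of i j] by (simp add: Cm_def Bm_def mult_ac)
next
  fix x :: "nat \<Rightarrow> real"
  assume nonzero: "\<exists>i\<in>{1..N}. x i \<noteq> 0"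
  define g where "g = gam N M d"
  define T where "T i j = dp M d i j * Y i * Y j" for i j
  define S where "S = (\<Sum>j\<in>{1..N}. Y j * x j)"
  define R where "R = (\<Sum>i\<in>{1..N}. \<Sum>j\<in>{1..N}-{i}. T i j * (x i - x j)\<^sup>2)"
  have T_sym: "T i j = T j i" if "i \<in> {1..N}" "j \<in> {1..N}" for i j
    using D_sym[OF that] by (simp add: T_def)
  have T_pos: "0 < T i j" if "i \<in> {1..N}" "j \<in> {1..N}" "i \<noteq> j" for i j
    using D_pos[OF that] Y_pos that by (simp add: T_def)
  have row: "(\<Sum>j\<in>{1..N}. Cm N M d Y i j * x j) = (\<Sum>j\<in>{1..N}-{i}. T i j * (x i - x j)) + g * Y i * S"
    if "i \<in> {1..N}" for i
  proof -
    have "(\<Sum>j\<in>{1..N}. Cm N M d Y i j * x j) = s3_lhs {1..N} (dp M d) g Y (\<lambda>j. Y j * x j) i"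
      using Cm_sum_eq_s3_lhs[OF that, of M d Y x] by (simp add: g_def)
    also have "\<dots> = s2_lhs {1..N} (dp M d) Y (\<lambda>j. Y j * x j) i + g * Y i * S"
      using s3_lhs_eq_s2_lhs[OF finite_I that, where D = "dp M d" and g = g and Y = Y
          and F = "\<lambda>j. Y j * x j"]
      by (simp add: S_def)
    also have "s2_lhs {1..N} (dp M d) Y (\<lambda>j. Y j * x j) i = (\<Sum>j\<in>{1..N}-{i}. T i j * (x i - x j))"
      by (simp add: s2_lhs_real T_def algebra_simps)
    finally show ?thesis .
  qed
  have "(\<Sum>i\<in>{1..N}. \<Sum>j\<in>{1..N}. x i * Cm N M d Y i j * x j)
      = (\<Sum>i\<in>{1..N}. x i * (\<Sum>j\<in>{1..N}. Cm N M d Y i j * x j))"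
    by (simp add: sum_distrib_left mult_ac)
  also have "\<dots> = (\<Sum>i\<in>{1..N}. x i * (\<Sum>j\<in>{1..N}-{i}. T i j * (x i - x j)) + g * S * (Y i * x i))"
  proof (intro sum.cong refl)
    fix i assume "i \<in> {1..N}"
    then show "x i * (\<Sum>j\<in>{1..N}. Cm N M d Y i j * x j)
        = x i * (\<Sum>j\<in>{1..N}-{i}. T i j * (x i - x j)) + g * S * (Y i * x i)"
      unfolding row[OF \<open>i \<in> {1..N}\<close>] by (simp add: algebra_simps)
  qed
  also have "\<dots> = (\<Sum>i\<in>{1..N}. x i * (\<Sum>j\<in>{1..N}-{i}. T i j * (x i - x j))) + g * S * S"
    unfolding sum.distrib by (simp add: S_def sum_distrib_left)
  also have "\<dots> = R / 2 + g * S\<^sup>2"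
    using sum_off_diagonal_quadratic[where T = T and x = x, OF finite_I T_sym] by (simp add: R_def power2_eq_square)
  finally have quadratic_form: "(\<Sum>i\<in>{1..N}. \<Sum>j\<in>{1..N}. x i * Cm N M d Y i j * x j) = R / 2 + g * S\<^sup>2" .
  have "0 \<le> T i j * (x i - x j)\<^sup>2" if "i \<in> {1..N}" "j \<in> {1..N} - {i}" for i j
    using T_pos[of i j] that by simp
  then have "0 \<le> R" unfolding R_def by (meson sum_nonneg)
  moreover have "0 < g" using gam_pos by (simp add: g_def)
  moreover have "R \<noteq> 0 \<or> S \<noteq> 0"
  proof (rule ccontr)
    assume "\<not> (R \<noteq> 0 \<or> S \<noteq> 0)"
    then have "R = 0" "S = 0" by simp_all
    have one: "1 \<in> {1..N}" using two_le_N by simp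
    have const: "x j = x 1" if "j \<in> {1..N}" for j
      using sum_off_diagonal_squares_eq_0[where T = T and x = x, OF finite_I T_pos _ that one]
        \<open>R = 0\<close> unfolding R_def by blast
    have "S = (\<Sum>j\<in>{1..N}. x 1 * Y j)"
      unfolding S_def by (rule sum.cong[OF refl]) (metis const mult.commute)
    then have "x 1 * sum Y {1..N} = 0" using \<open>S = 0\<close> by (simp add: sum_distrib_left)
    then have "x 1 = 0" using sum_Y_pos by simp
    then show False using nonzero const by metis
  qed
  ultimately show "0 < (\<Sum>i\<in>{1..N}. \<Sum>j\<in>{1..N}. x i * Cm N M d Y i j * x j)"
    unfolding quadratic_form by (auto intro: add_pos_nonneg add_nonneg_pos)
qed

end

locale partial_mixture = mixture +
  fixes k :: nat
  assumes one_le_k: "1 \<le> k" and k_less_N: "k < N"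
    and Y_present: "\<And>i. i \<in> {1..k} \<Longrightarrow> 0 < Y i"
    and Y_absent: "\<And>i. i \<in> {k+1..N} \<Longrightarrow> Y i = 0"
begin

sublocale present: diffusion_coeffs "{1..k}" "dp M d" Y
proof
  have sub: "{1..k} \<subseteq> {1..N}" using k_less_N by auto
  show "dp M d i j = dp M d j i" if "i \<in> {1..k}" "j \<in> {1..k}" for i j
    using that sub D_sym by blast
  show "0 < dp M d i j" if "i \<in> {1..k}" "j \<in> {1..k}" "i \<noteq> j" for i j
    using that sub D_pos by blast
  show "\<exists>i\<in>{1..k}. 0 < Y i" using one_le_k Y_present by auto
qed (use Y_present in \<open>auto intro: less_imp_le\<close>)

lemma S1_eq_at_present:
  fixes P :: "nat \<Rightarrow> real ^ 'n"
  assumes "sum P {1..N} = 0" "S1 N M d Y P V" "S1 N M d Y P V'" "i \<in> {1..k}"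
  shows "V i = V' i"
  using S1_eq_at_nonzero_weight[OF assms(1-3)] assms(4) Y_present[OF assms(4)] k_less_N by simp

lemma S2_absent:
  assumes "S2 N M d Y P F" "i \<in> {k+1..N}"
  shows "F i = (1 / (\<Sum>j\<in>{1..k}. dp M d i j * Y j)) *\<^sub>R P i"
proof -
  have "i \<in> {1..N}" using assms(2) by simp
  then have "s2_lhs {1..N} (dp M d) Y F i = P i" using assms(1) unfolding S2_iff by blast
  moreover have "(\<Sum>j\<in>{1..N}-{i}. dp M d i j * Y j) = (\<Sum>j\<in>{1..k}. dp M d i j * Y j)"
    using assms(2) Y_absent by (intro sum.mono_neutral_right) auto
  ultimately have weighted: "(\<Sum>j\<in>{1..k}. dp M d i j * Y j) *\<^sub>R F i = P i"
    using Y_absent[OF assms(2)] by (simp add: s2_lhs_def)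
  have "0 < (\<Sum>j\<in>{1..k}. dp M d i j * Y j)"
  proof (rule sum_pos)
    show "0 < dp M d i j * Y j" if "j \<in> {1..k}" for j
      using that assms(2) D_pos[of i j] Y_present[OF that] by simp
  qed (use one_le_k in auto)
  then show ?thesis by (simp flip: weighted)
qed

lemma Ksys_S2_solution:
  assumes "sum P {1..N} = 0" "S2 N M d Y P F"
  shows "Ksys N k M d Y P F F"
  unfolding Ksys_iff
proof
  fix i assume i: "i \<in> {1..k}"
  then have "i \<in> {1..N}" using k_less_N by simp
  then have "s3_lhs {1..N} (dp M d) (gam N M d) Y F i = P i"
    using assms S3_iff_S2[OF assms(1)] unfolding S3_iff by blast
  moreover have "{1..N} - {1..k} = {k+1..N}" by auto
  ultimately have "s3_lhs {1..k} (dp M d) (gam N M d) Y F i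
      - Y i *\<^sub>R (\<Sum>j\<in>{k+1..N}. (dp M d i j - gam N M d) *\<^sub>R F j) = P i"
    using s3_lhs_restrict[of "{1..N}" "{1..k}" i Y, where D = "dp M d" and g = "gam N M d" and F = F]
      i k_less_N Y_absent by simp
  then show "s3_lhs {1..k} (dp M d) (gam N M d) Y F i
      = P i + Y i *\<^sub>R (\<Sum>j\<in>{k+1..N}. (dp M d i j - gam N M d) *\<^sub>R F j)"
    by (simp add: diff_eq_eq)
qed

lemma uniq_sol_Ksys:
  fixes P F :: "nat \<Rightarrow> real ^ 'n"
  assumes "sum P {1..N} = 0" "S2 N M d Y P F"
  shows "uniq_sol {1..k} (Ksys N k M d Y P F)"
  unfolding uniq_sol_def
proof (intro conjI allI impI ballI)
  show "\<exists>G. Ksys N k M d Y P F G" using Ksys_S2_solution[OF assms] by blast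
  fix G G' i
  assume "Ksys N k M d Y P F G" "Ksys N k M d Y P F G'" "i \<in> {1..k}"
  then show "G i = G' i"
    using gam_pos by (rule_tac present.s3_lhs_injective[where g = "gam N M d"]) (auto simp: Ksys_iff)
qed

end

theorem theorem3p1:
  fixes N :: nat and M :: "nat \<Rightarrow> real" and d :: "nat \<Rightarrow> nat \<Rightarrow> real"
    and Y :: "nat \<Rightarrow> real" and P :: "nat \<Rightarrow> real ^ 'n"
  assumes N2: "N \<ge> 2"
    and Mpos: "\<forall>i\<in>{1..N}. M i > 0"
    and dsym: "\<forall>i\<in>{1..N}. \<forall>j\<in>{1..N}. i \<noteq> j \<longrightarrow> d i j = d j i"
    and dpos: "\<forall>i\<in>{1..N}. \<forall>j\<in>{1..N}. i \<noteq> j \<longrightarrow> d i j > 0"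
    and Psum: "(\<Sum>i\<in>{1..N}. P i) = 0"
    and Ynn: "\<forall>i\<in>{1..N}. Y i \<ge> 0"
    and Ynz: "\<exists>i\<in>{1..N}. Y i \<noteq> 0"
  shows
   \<comment> \<open>(i)\<close>
   "((\<forall>i\<in>{1..N}. Y i > 0) \<longrightarrow>
       uniq_sol {1..N} (S1 N M d Y P)
     \<and> uniq_sol {1..N} (S2 N M d Y P)
     \<and> (\<forall>V. S1 N M d Y P V \<longrightarrow> S2 N M d Y P (\<lambda>i. Y i *\<^sub>R V i))
     \<and> (\<forall>V. S1 N M d Y P V \<longrightarrow> Csys N M d Y P V)
     \<and> uniq_sol {1..N} (Csys N M d Y P)
     \<and> sym_posdef N (Cm N M d Y))
   \<comment> \<open>(ii)\<close>
   \<and> (\<forall>k. 1 \<le> k \<and> k < N \<longrightarrow> (\<forall>i\<in>{1..k}. Y i > 0) \<longrightarrow> (\<forall>i\<in>{k+1..N}. Y i = 0) \<longrightarrow>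
         (\<forall>V V'. S1 N M d Y P V \<longrightarrow> S1 N M d Y P V' \<longrightarrow> (\<forall>i\<in>{1..k}. V i = V' i))
       \<and> (\<forall>V. S1 N M d Y P V \<longrightarrow> (\<forall>i\<in>{k+1..N}. \<forall>w. S1 N M d Y P (V(i := w))))
       \<and> uniq_sol {1..N} (S2 N M d Y P)
       \<and> (\<forall>F. S2 N M d Y P F \<longrightarrow>
            (\<forall>i\<in>{k+1..N}. F i = (1 / (\<Sum>j\<in>{1..k}. dp M d i j * Y j)) *\<^sub>R P i))
       \<and> (\<forall>F. S2 N M d Y P F \<longrightarrow>
            Ksys N k M d Y P F F \<and> uniq_sol {1..k} (Ksys N k M d Y P F))
       \<and> ((\<forall>i\<in>{k+1..N}. P i = 0) \<longrightarrow>
            (\<forall>F. S2 N M d Y P F \<longrightarrow> (\<forall>i\<in>{k+1..N}. F i = 0))))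
   \<comment> \<open>(iii)\<close>
   \<and> (\<forall>Q :: nat \<Rightarrow> real ^ 'n. uniq_sol {1..N} (S3 N M d Y Q))
   \<and> (\<forall>(Q :: nat \<Rightarrow> real ^ 'n) F. S3 N M d Y Q F \<longrightarrow>
        (gam N M d * (\<Sum>i\<in>{1..N}. Y i)) *\<^sub>R (\<Sum>j\<in>{1..N}. F j) = (\<Sum>j\<in>{1..N}. Q j))
   \<and> (\<forall>F. S3 N M d Y P F \<longleftrightarrow> S2 N M d Y P F)"
proof -
  interpret mixture N M d Y using assms by unfold_locales auto
  show ?thesis
  proof (intro conjI impI allI)
    assume Y_pos: "\<forall>i\<in>{1..N}. Y i > 0"
    show "uniq_sol {1..N} (S1 N M d Y P)" by (rule uniq_sol_S1[OF Psum Y_pos])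
    show "uniq_sol {1..N} (Csys N M d Y P)" unfolding Csys_eq_S1[OF Psum] by (rule uniq_sol_S1[OF Psum Y_pos])
    show "sym_posdef N (Cm N M d Y)" by (rule sym_posdef_Cm[OF Y_pos])
  next
    fix V assume "S1 N M d Y P V"
    then show "S2 N M d Y P (\<lambda>i. Y i *\<^sub>R V i)" "Csys N M d Y P V"
      by (simp_all add: S1_iff_S2[symmetric] Csys_eq_S1[OF Psum])
  next
    fix k assume k: "1 \<le> k \<and> k < N" "\<forall>i\<in>{1..k}. Y i > 0" "\<forall>i\<in>{k+1..N}. Y i = 0"
    interpret partial_mixture N M d Y k using k by unfold_locales auto
    show "\<forall>i\<in>{1..k}. V i = V' i" if "S1 N M d Y P V" "S1 N M d Y P V'" for V V'
      using S1_eq_at_present[OF Psum that] by blast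
    show "\<forall>i\<in>{k+1..N}. \<forall>w. S1 N M d Y P (V(i := w))" if "S1 N M d Y P V" for V
      using S1_update_zero_weight[OF that] Y_absent by blast
    show "\<forall>i\<in>{k+1..N}. F i = (1 / (\<Sum>j\<in>{1..k}. dp M d i j * Y j)) *\<^sub>R P i"
      and "Ksys N k M d Y P F F" and "uniq_sol {1..k} (Ksys N k M d Y P F)"
      if "S2 N M d Y P F" for F
      using S2_absent[OF that] Ksys_S2_solution[OF Psum that] uniq_sol_Ksys[OF Psum that] by simp_all
    show "\<forall>i\<in>{k+1..N}. F i = 0" if "\<forall>i\<in>{k+1..N}. P i = 0" "S2 N M d Y P F" for F
      using S2_absent[OF that(2)] that(1) by simp
  qed (use uniq_sol_S2[OF Psum] uniq_sol_S3 S3_sum S3_iff_S2[OF Psum] in auto)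
qed

end
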